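(* Consider the sparse federated learning setting and the FedGradMP algorithm described in the context, under the standing assumptions stated there. Fix a round $t$, a client $i$ and a local step $k$, and let $\widehat{\Gamma}$ be the index set obtained at the $k$-th local iteration at client $i$ (so $\widehat\Gamma=\Gamma\cup\Lambda$ with $\Gamma=\mathrm{approx}_{2\tau}(\nabla g_{i,j_k}(x^{(i)}_{t,k}),\eta_1)$, and $b^{(i)}_{t,k}$ is the minimizer of $f_i$ over $\mathcal{R}(\mathcal{A}_{\widehat\Gamma})$). Then, for any $\theta>0$, \[ \mathbb{E}^{(i)}_{j_k}\,\|P^\perp_{\widehat{\Gamma}}( b^{(i)}_{t,k} - x^* )\|_2^2 \le \beta_2(i)\, \| x^{(i)}_{t,k} - x^* \|_2^2 + \xi_2(i), \] where \[ \beta_2(i) = 2\,\frac{\left( \bar{\rho}^{+(i)}_{4\tau} + \frac{1}{\theta^2} \right) - \eta_1^2 \rho^-_{4\tau}(i)}{\eta_1^2 \rho_{4\tau}^{-}(i)} + \frac{2\sqrt{\eta_1^2-1}}{\eta_1 \rho_{4\tau}^{-}(i)}\left(3\, \mathbb{E}_{j_k} (\rho^{+}_\tau(i,j_k))^2+1\right), \] and \[ \xi_2(i)=\frac{8}{(\rho_{4\tau}^{-}(i))^2} \max_{\Omega \subset [d],\,|\Omega| = 4\tau} \| P_{\Omega} \nabla f_i(x^* ) \|_2^2 + \frac{1}{\rho_{4\tau}^{-}(i)} \left[\left(2\theta^2 + \frac{6\sqrt{\eta_1^2-1}}{\eta_1} \right) \sigma_i^2 + \frac{6\sqrt{\eta_1^2-1}}{\eta_1}\|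 \nabla f_i (x^* ) \|_2^2 \right] \] if $\eta_1>1$, and \[ \xi_2(i)=\frac{8}{(\rho_{4\tau}^{-}(i))^2} \max_{\Omega \subset [d],\,|\Omega| = 4\tau} \| P_{\Omega} \nabla f_i(x^* ) \|_2^2 + \frac{2\theta^2 \sigma_i^2}{\rho_{4\tau}^{-}(i)} \] if $\eta_1=1$. Here $\mathbb{E}^{(i)}_{j_k}$ denotes expectation over the mini-batch index $j_k$ drawn uniformly at random from $[M]$ at the $k$-th local step of client $i$, and $\mathbb{E}_{j_k}(\rho^+_\tau(i,j_k))^2=\frac1M\sum_{j=1}^M(\rho^+_\tau(i,j))^2$.
   Context: Dictionary sparsity: let $\mathcal{A}=\{a_1,\dots,a_d\}\subset\mathbb{R}^n$ be a finite set of atoms. A vector $x$ is $s$-sparse with respect to $\mathcal{A}$ if $x=\sum_{l=1}^d\alpha_l a_l$ with at most $s$ nonzero $\alpha_l$; $\|x\|_{0,\mathcal{A}}=\min\{|T|: x=\sum_{l\in T}\alpha_l a_l,\ T\subseteq[d]\}$. For $\Gamma\subseteq[d]$, $\mathcal{R}(\mathcal{A}_\Gamma)$ is the span of $\{a_l:l\in\Gamma\}$, $P_\Gamma$ the orthogonal projection onto it and $P_\Gamma^\perp=I-P_\Gamma$. $\mathcal{H}_s(w)$ denotes a best $s$-sparse approximation of $w$ w.r.t. $\mathcal{A}$, i.e. a minimizer of $\|w-x\|_2$ over $s$-sparse $x$. For $\eta\ge 1$, $\mathrm{approx}_s(w,\eta)$ is an index set $\Gamma\subseteq[d]$ with $|\Gamma|\le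 s$ such that $\|P_\Gamma w-w\|_2\le\eta\|w-\mathcal{H}_s(w)\|_2$ ($\eta=1$ means exact projection). Problem: there are $N$ clients with weights $p_i\in[0,1]$, $\sum_i p_i=1$; $f(x)=\sum_{i=1}^N p_if_i(x)$ with $f_i(x)=\frac1M\sum_{j=1}^M g_{i,j}(x)$ ($g_{i,j}$ differentiable: loss of client $i$ on mini-batch $j$). $x^*$ is a minimizer of $f$ subject to $\|x\|_{0,\mathcal{A}}\le\tau$. Standing assumptions (for $s\in\{\tau,4\tau\}$): ($\mathcal{A}$-RSC) for each $i$ and all $x_1,x_2$ with $\|x_1-x_2\|_{0,\mathcal{A}}\le s$: $f_i(x_1)-f_i(x_2)-\langle\nabla f_i(x_2),x_1-x_2\rangle\ge\frac{\rho^-_s(i)}{2}\|x_1-x_2\|_2^2$. ($\mathcal{A}$-RSS) for each $i,j$ and all $x_1,x_2$ with $\|x_1-x_2\|_{0,\mathcal{A}}\le s$: $\|\nabla g_{i,j}(x_1)-\nabla g_{i,j}(x_2)\|_2\le\rho^+_s(i,j)\|x_1-x_2\|_2$; set $\bar\rho^{+(i)}_s=\frac1M\sum_{j=1}^M\rho^+_s(i,j)$. (Stochastic gradients) with $j$ uniform on $[M]$, for every $\tau$-sparse $x$: $\mathbb{E}_j\nabla g_{i,j}(x)=\nabla f_i(x)$ and $\mathbb{E}_j\|\nabla g_{i,j}(x)-\nabla f_i(x)\|_2^2\le\sigma_i^2$. FedGradMP algorithm (parameters: rounds $T$, local iterations $K$, sparsity $\tau$, $\eta_1,\eta_2,\eta_3\ge1$;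 initial point $x_0$, index set $\Lambda=\emptyset$ initially): for each round $t$ and each client $i$: set $x^{(i)}_{t,1}=x_t$; for $k=1,\dots,K$: draw $j_k$ uniformly at random from $[M]$ (independently of everything else); compute $r=\nabla g_{i,j_k}(x^{(i)}_{t,k})$; $\Gamma=\mathrm{approx}_{2\tau}(r,\eta_1)$; $\widehat\Gamma=\Gamma\cup\Lambda$; $b^{(i)}_{t,k}=\arg\min\{f_i(x):x\in\mathcal{R}(\mathcal{A}_{\widehat\Gamma})\}$; $\Lambda=\mathrm{approx}_\tau(b^{(i)}_{t,k},\eta_2)$; $x^{(i)}_{t,k+1}=P_\Lambda(b^{(i)}_{t,k})$. Then the server sets $\Lambda_s=\mathrm{approx}_\tau(\sum_ip_ix^{(i)}_{t,K+1},\eta_3)$ and $x_{t+1}=P_{\Lambda_s}(\sum_ip_ix^{(i)}_{t,K+1})$. *)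

theory Defs
  imports "HOL-Analysis.Analysis"
begin

text \<open>Atoms are A 0, ..., A (d-1) (i.e. the index set [d] is rendered as {..<d}).\<close>

definition sparse_wrt :: "(nat \<Rightarrow> 'a::euclidean_space) \<Rightarrow> nat \<Rightarrow> nat \<Rightarrow> 'a \<Rightarrow> bool" where
  "sparse_wrt A d s x \<longleftrightarrow>
     (\<exists>T \<alpha>. T \<subseteq> {..<d} \<and> card T \<le> s \<and> x = (\<Sum>l\<in>T. \<alpha> l *\<^sub>R A l))"

definition proj :: "(nat \<Rightarrow> 'a::euclidean_space) \<Rightarrow> nat set \<Rightarrow> 'a \<Rightarrow> 'a" where
  "proj A \<Gamma> w = closest_point (span (A ` \<Gamma>)) w"

definition proj_perp :: "(nat \<Rightarrow> 'a::euclidean_space) \<Rightarrow> nat set \<Rightarrow> 'a \<Rightarrow> 'a" where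
  "proj_perp A \<Gamma> w = w - proj A \<Gamma> w"

definition best_sparse_approx :: "(nat \<Rightarrow> 'a::euclidean_space) \<Rightarrow> nat \<Rightarrow> nat \<Rightarrow> 'a \<Rightarrow> 'a \<Rightarrow> bool" where
  "best_sparse_approx A d s w h \<longleftrightarrow>
     sparse_wrt A d s h \<and> (\<forall>x. sparse_wrt A d s x \<longrightarrow> norm (w - h) \<le> norm (w - x))"

text \<open>Gamma is a valid output of approx_s(w, eta).\<close>
definition is_approx :: "(nat \<Rightarrow> 'a::euclidean_space) \<Rightarrow> nat \<Rightarrow> nat \<Rightarrow> 'a \<Rightarrow> real \<Rightarrow> nat set \<Rightarrow> bool" where
  "is_approx A d s w \<eta> \<Gamma> \<longleftrightarrow>
     \<Gamma> \<subseteq> {..<d} \<and> card \<Gamma> \<le> s \<and>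
     (\<exists>h. best_sparse_approx A d s w h \<and> norm (proj A \<Gamma> w - w) \<le> \<eta> * norm (w - h))"

definition loc_f :: "nat \<Rightarrow> (nat \<Rightarrow> nat \<Rightarrow> 'a \<Rightarrow> real) \<Rightarrow> nat \<Rightarrow> 'a \<Rightarrow> real" where
  "loc_f M g i x = (1 / real M) * (\<Sum>j<M. g i j x)"

definition loc_grad :: "nat \<Rightarrow> (nat \<Rightarrow> nat \<Rightarrow> 'a \<Rightarrow> 'a::real_vector) \<Rightarrow> nat \<Rightarrow> 'a \<Rightarrow> 'a" where
  "loc_grad M G i x = (1 / real M) *\<^sub>R (\<Sum>j<M. G i j x)"

end

theory Submission
  imports Defs
begin

(* Write r_j for the stochastic gradient at x, q_j = P_Gamma_j r_j for its selected part, and R for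
   a common support of size 2 tau of x and xstar.  Since b_j and x lie in the span of the atoms in
   Gamma_j \<union> Lambda, the residual P_perp (b_j - xstar) is no longer than xstar - u for any u in
   that span.  The choice u = x gives the trivial bound |x - xstar|^2.  The choice u = x - q_j / c,
   a gradient step along the selected atoms with c = rho_bar + 1/theta^2, is compared with xstar by
   restricted strong convexity at x and at xstar, the descent lemma along q_j, and the selection
   property |P_R r| <= |P_Gamma r| / eta_1 + sqrt (eta_1^2 - 1) / eta_1 |r|, which holds because
   P_R r is itself 2 tau-sparse.  Two Young inequalities then cancel every |q_j|^2 term, and
   averaging over j kills the noise term that is linear and bounds the quadratic one by sigma^2.
   The stated constants follow by a case analysis between the trivial bound and the Young
   parameters rho/4 and rho/10.  The smoothness constants rho^+_tau do not apply to the
   2 tau-sparse difference x - xstar, so their second moment enters only through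
   rho^2 <= E (rho^+_tau)^2. *)

section \<open>Orthogonal projections onto spans of atoms\<close>

lemma closed_convex_span:
  fixes S :: "'a::euclidean_space set"
  shows "closed (span S)" "convex (span S)" "span S \<noteq> {}"
  using closed_subspace subspace_imp_convex span_zero by auto

lemma proj_in_span: "proj A \<Gamma> w \<in> span (A ` \<Gamma>)"
  unfolding proj_def using closed_convex_span by (intro closest_point_in_set)

lemma norm_proj_perp_le: "u \<in> span (A ` \<Gamma>) \<Longrightarrow> norm (proj_perp A \<Gamma> w) \<le> norm (w - u)"
  unfolding proj_perp_def proj_def
  using closest_point_le[OF closed_convex_span(1)] by (simp add: dist_norm)

lemma norm_proj_perp_diff_le:
  assumes "b \<in> span (A ` \<Gamma>)" "u \<in> span (A ` \<Gamma>)"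
  shows "norm (proj_perp A \<Gamma> (b - w)) \<le> norm (w - u)"
  using norm_proj_perp_le[OF span_diff[OF assms], of "b - w"] by (simp add: norm_minus_commute)

lemma mean_residual_le_dist:
  assumes M: "0 < M" and b: "\<And>j. j < M \<Longrightarrow> b j \<in> span (A ` (\<Gamma> j \<union> \<Lambda>))"
    and x: "x \<in> span (A ` \<Lambda>)"
  shows "(1 / real M) * (\<Sum>j<M. (norm (proj_perp A (\<Gamma> j \<union> \<Lambda>) (b j - w)))\<^sup>2) \<le> (norm (x - w))\<^sup>2"
proof -
  have "(norm (proj_perp A (\<Gamma> j \<union> \<Lambda>) (b j - w)))\<^sup>2 \<le> (norm (x - w))\<^sup>2" if "j < M" for j
    using norm_proj_perp_diff_le[OF b[OF that], of x w] x span_mono[of "A ` \<Lambda>" "A ` (\<Gamma> j \<union> \<Lambda>)"]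
    by (auto simp: norm_minus_commute intro!: power_mono)
  then have "(1 / real M) * (\<Sum>j<M. (norm (proj_perp A (\<Gamma> j \<union> \<Lambda>) (b j - w)))\<^sup>2)
      \<le> (1 / real M) * (\<Sum>j<M. (norm (x - w))\<^sup>2)"
    by (intro mult_left_mono sum_mono) auto
  then show ?thesis
    using M by simp
qed

lemma proj_perp_orthogonal:
  assumes u: "u \<in> span (A ` \<Gamma>)"
  shows "proj_perp A \<Gamma> w \<bullet> u = 0"
proof -
  let ?P = "proj A \<Gamma> w"
  have P: "?P \<in> span (A ` \<Gamma>)" by (rule proj_in_span)
  have "(w - ?P) \<bullet> (y - ?P) \<le> 0" if "y \<in> span (A ` \<Gamma>)" for y
    unfolding proj_def using closest_point_dot[OF closed_convex_span(2,1) that] .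
  from this[OF span_add[OF P u]] this[OF span_diff[OF P u]]
  show ?thesis unfolding proj_perp_def by (simp add: inner_minus_right)
qed

lemma inner_proj_left: "u \<in> span (A ` \<Gamma>) \<Longrightarrow> proj A \<Gamma> w \<bullet> u = w \<bullet> u"
  using proj_perp_orthogonal[of u A \<Gamma> w] unfolding proj_perp_def by (simp add: inner_diff_left)

lemma norm_proj_pythagorean: "(norm w)\<^sup>2 = (norm (proj A \<Gamma> w))\<^sup>2 + (norm (proj_perp A \<Gamma> w))\<^sup>2"
proof -
  have "orthogonal (proj A \<Gamma> w) (proj_perp A \<Gamma> w)"
    using proj_perp_orthogonal[OF proj_in_span] unfolding orthogonal_def by (simp add: inner_commute)
  from norm_add_Pythagorean[OF this] show ?thesis by (simp add: proj_perp_def)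
qed

lemma sparse_wrt_of_span:
  assumes R: "R \<subseteq> {..<d}" "card R \<le> s" and v: "v \<in> span (A ` R)"
  shows "sparse_wrt A d s v"
proof -
  obtain t r where t: "finite t" "t \<subseteq> A ` R" and v_eq: "v = (\<Sum>a\<in>t. r a *\<^sub>R a)"
    using v unfolding span_explicit by auto
  obtain U where U: "U \<subseteq> R" "inj_on A U" "t = A ` U"
    using t(2) unfolding subset_image_inj by blast
  have "v = (\<Sum>l\<in>U. r (A l) *\<^sub>R A l)"
    unfolding v_eq U(3) sum.reindex[OF U(2)] by simp
  moreover have "card U \<le> s"
    using card_mono[OF finite_subset[OF R(1)] U(1)] R(2) by simp
  ultimately show ?thesis
    unfolding sparse_wrt_def using U(1) R(1) by (intro exI[of _ U] exI[of _ "\<lambda>l. r (A l)"]) auto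
qed

lemma sparse_wrt_imp_span:
  assumes "sparse_wrt A d s v"
  obtains T where "T \<subseteq> {..<d}" "card T \<le> s" "v \<in> span (A ` T)"
proof -
  obtain T \<alpha> where T: "T \<subseteq> {..<d}" "card T \<le> s" "v = (\<Sum>l\<in>T. \<alpha> l *\<^sub>R A l)"
    using assms unfolding sparse_wrt_def by blast
  have "v \<in> span (A ` T)" unfolding T(3) by (intro span_sum span_scale span_base) auto
  with T that show ?thesis by blast
qed

lemma sparse_wrt_uminus:
  assumes "sparse_wrt A d s v"
  shows "sparse_wrt A d s (- v)"
proof -
  obtain T where "T \<subseteq> {..<d}" "card T \<le> s" "v \<in> span (A ` T)"
    using sparse_wrt_imp_span[OF assms] .
  then show ?thesis
    using sparse_wrt_of_span span_neg by blast
qed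

lemma sparse_wrt_mono: "sparse_wrt A d s v \<Longrightarrow> s \<le> s' \<Longrightarrow> sparse_wrt A d s' v"
  unfolding sparse_wrt_def by (blast intro: order_trans)

lemma obtain_superset_with_card:
  assumes "\<Omega> \<subseteq> {..<d}" "card \<Omega> \<le> n" "n \<le> d"
  obtains \<Omega>' where "\<Omega> \<subseteq> \<Omega>'" "\<Omega>' \<subseteq> {..<d}" "card \<Omega>' = n"
proof -
  have fin: "finite \<Omega>" using assms(1) finite_subset by blast
  have "n - card \<Omega> \<le> card ({..<d} - \<Omega>)"
    using assms fin by (simp add: card_Diff_subset)
  then obtain B where B: "B \<subseteq> {..<d} - \<Omega>" "card B = n - card \<Omega>" "finite B"
    by (rule obtain_subset_with_card_n)
  have "card (\<Omega> \<union> B) = n"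
    using B fin assms(2) by (subst card_Un_disjoint) auto
  with B assms(1) that show ?thesis by blast
qed

lemma obtain_common_support:
  assumes "\<Lambda> \<subseteq> {..<d}" "card \<Lambda> \<le> \<tau>" "sparse_wrt A d \<tau> xs"
  obtains R where "\<Lambda> \<subseteq> R" "R \<subseteq> {..<d}" "card R \<le> 2 * \<tau>" "xs \<in> span (A ` R)"
proof -
  obtain T where T: "T \<subseteq> {..<d}" "card T \<le> \<tau>" "xs \<in> span (A ` T)"
    using sparse_wrt_imp_span[OF assms(3)] .
  have "card (\<Lambda> \<union> T) \<le> 2 * \<tau>"
    using card_Un_le[of \<Lambda> T] assms(2) T(2) by simp
  moreover have "xs \<in> span (A ` (\<Lambda> \<union> T))"
    using T(3) span_mono[of "A ` T" "A ` (\<Lambda> \<union> T)"] by blast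
  moreover have "\<Lambda> \<union> T \<subseteq> {..<d}"
    using assms(1) T(1) by simp
  ultimately show ?thesis
    using that[of "\<Lambda> \<union> T"] by simp
qed

lemma mult_le_weighted_squares:
  fixes a b k :: real
  assumes "0 < k"
  shows "a * b \<le> a\<^sup>2 / (4 * k) + k * b\<^sup>2"
proof -
  have "0 \<le> (a - 2 * k * b)\<^sup>2 / (4 * k)" using assms by simp
  also have "\<dots> = a\<^sup>2 / (4 * k) + k * b\<^sup>2 - a * b"
    using assms by (simp add: field_simps power2_eq_square)
  finally show ?thesis by simp
qed

(* Q, N and D stand for the norms of the selected gradient, the noise and x - xstar; the step length
   1/c makes the Q^2 terms of the two Young inequalities cancel. *)
lemma step_length_cancellation:
  fixes Q N D L \<theta> \<eta> :: real
  defines "c \<equiv> L + 1 / \<theta>\<^sup>2"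
  assumes c: "0 < c" and \<theta>: "\<theta> \<noteq> 0"
  shows "- Q\<^sup>2 / c + L / 2 * (Q / c)\<^sup>2 + Q * N / c + Q * D / \<eta> \<le> c * D\<^sup>2 / (2 * \<eta>\<^sup>2) + \<theta>\<^sup>2 / 2 * N\<^sup>2"
proof -
  have "Q * (D / \<eta>) \<le> Q\<^sup>2 / (2 * c) + c / 2 * (D / \<eta>)\<^sup>2"
    using mult_le_weighted_squares[of "c / 2" Q "D / \<eta>"] c by simp
  moreover have "Q / (\<theta> * c) * (\<theta> * N) \<le> (Q / (\<theta> * c))\<^sup>2 / 2 + 1 / 2 * (\<theta> * N)\<^sup>2"
    using mult_le_weighted_squares[of "1 / 2" "Q / (\<theta> * c)" "\<theta> * N"] by simp
  moreover have "- Q\<^sup>2 / c + L / 2 * (Q / c)\<^sup>2 + Q\<^sup>2 / (2 * c) + (Q / (\<theta> * c))\<^sup>2 / 2 = 0"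
  proof -
    have "L = c - 1 / \<theta>\<^sup>2" unfolding c_def by simp
    then show ?thesis
      using c \<theta> by (simp add: field_simps power2_eq_square) algebra
  qed
  ultimately show ?thesis
    using c \<theta> by (simp add: power_divide power_mult_distrib)
qed

lemma descent_step_terms_le:
  fixes r g q \<Delta> :: "'a::real_inner" and L \<theta> \<eta> a :: real
  defines "c \<equiv> L + 1 / \<theta>\<^sup>2"
  assumes c: "0 < c" and \<theta>: "\<theta> \<noteq> 0" and rq: "r \<bullet> q = (norm q)\<^sup>2"
    and sel: "- (r \<bullet> \<Delta>) \<le> norm q * norm \<Delta> / \<eta> + a * norm \<Delta> * norm r"
  shows "g \<bullet> (- (1 / c) *\<^sub>R q - \<Delta>) + L / 2 * (norm (- (1 / c) *\<^sub>R q))\<^sup>2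
    \<le> c * (norm \<Delta>)\<^sup>2 / (2 * \<eta>\<^sup>2) + a * norm \<Delta> * norm r + \<theta>\<^sup>2 / 2 * (norm (r - g))\<^sup>2 + (r - g) \<bullet> \<Delta>"
proof -
  have "g \<bullet> (- (1 / c) *\<^sub>R q - \<Delta>) = - (norm q)\<^sup>2 / c + ((r - g) \<bullet> q) / c - r \<bullet> \<Delta> + (r - g) \<bullet> \<Delta>"
    using rq by (simp add: inner_diff_left inner_diff_right diff_divide_distrib)
  moreover have "((r - g) \<bullet> q) / c \<le> norm q * norm (r - g) / c"
    using norm_cauchy_schwarz[of "r - g" q] c by (simp add: mult.commute divide_right_mono)
  moreover have "L / 2 * (norm (- (1 / c) *\<^sub>R q))\<^sup>2 = L / 2 * (norm q / c)\<^sup>2"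
    using c by simp
  moreover have "- (norm q)\<^sup>2 / c + L / 2 * (norm q / c)\<^sup>2 + norm q * norm (r - g) / c
      + norm q * norm \<Delta> / \<eta>
      \<le> c * (norm \<Delta>)\<^sup>2 / (2 * \<eta>\<^sup>2) + \<theta>\<^sup>2 / 2 * (norm (r - g))\<^sup>2"
    using step_length_cancellation[of L \<theta>] c \<theta> unfolding c_def by simp
  ultimately show ?thesis
    using sel by linarith
qed

lemma mean_squared_le_mean_of_squares:
  fixes a :: "nat \<Rightarrow> real"
  assumes "0 < M"
  shows "((1 / real M) * (\<Sum>j<M. a j))\<^sup>2 \<le> (1 / real M) * (\<Sum>j<M. (a j)\<^sup>2)"
  using sum_squared_le_sum_of_squares[of a "{..<M}"] assms
  by (simp add: power_mult_distrib power_divide field_simps power2_eq_square)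

lemma mean_le_of_mean_sq_le:
  fixes a :: "nat \<Rightarrow> real"
  assumes "0 < M" "(1 / real M) * (\<Sum>j<M. (a j)\<^sup>2) \<le> \<sigma>\<^sup>2"
  shows "(1 / real M) * (\<Sum>j<M. a j) \<le> \<bar>\<sigma>\<bar>"
proof -
  have "\<bar>(1 / real M) * (\<Sum>j<M. a j)\<bar> \<le> \<bar>\<sigma>\<bar>"
    unfolding abs_le_square_iff using mean_squared_le_mean_of_squares[OF assms(1), of a] assms(2)
    by linarith
  then show ?thesis
    by linarith
qed

lemma mean_norm_le_of_variance:
  fixes r :: "nat \<Rightarrow> 'b::real_normed_vector"
  assumes M: "0 < M" and variance: "(1 / real M) * (\<Sum>j<M. (norm (r j - m))\<^sup>2) \<le> \<sigma>\<^sup>2"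
  shows "(1 / real M) * (\<Sum>j<M. norm (r j)) \<le> norm m + \<bar>\<sigma>\<bar>"
proof -
  have "(\<Sum>j<M. norm (r j)) \<le> (\<Sum>j<M. norm m + norm (r j - m))"
    by (intro sum_mono) (metis add.commute diff_add_cancel norm_triangle_ineq)
  then have "(1 / real M) * (\<Sum>j<M. norm (r j)) \<le> (1 / real M) * (\<Sum>j<M. norm m + norm (r j - m))"
    by (intro mult_left_mono) simp_all
  also have "\<dots> = norm m + (1 / real M) * (\<Sum>j<M. norm (r j - m))"
    using M by (simp add: sum.distrib distrib_left)
  finally show ?thesis
    using mean_le_of_mean_sq_le[OF M variance] by simp
qed

section \<open>Gradient selection\<close>

lemma norm_proj_le_approx:
  assumes \<Gamma>: "is_approx A d s r \<eta> \<Gamma>" and R: "R \<subseteq> {..<d}" "card R \<le> s" and \<eta>: "1 \<le> \<eta>"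
  shows "norm (proj A R r) \<le> norm (proj A \<Gamma> r) / \<eta> + sqrt (\<eta>\<^sup>2 - 1) / \<eta> * norm r"
proof -
  obtain h where h: "best_sparse_approx A d s r h"
    and sel: "norm (proj A \<Gamma> r - r) \<le> \<eta> * norm (r - h)"
    using \<Gamma> unfolding is_approx_def by blast
  have "norm (r - h) \<le> norm (proj_perp A R r)"
    using h sparse_wrt_of_span[OF R proj_in_span]
    unfolding best_sparse_approx_def proj_perp_def by blast
  with sel \<eta> have "norm (proj_perp A \<Gamma> r) \<le> \<eta> * norm (proj_perp A R r)"
    unfolding proj_perp_def by (simp add: norm_minus_commute order_trans[OF _ mult_left_mono])
  from power_mono[OF this norm_ge_zero, of 2]
  have "(norm (proj_perp A \<Gamma> r))\<^sup>2 \<le> \<eta>\<^sup>2 * (norm (proj_perp A R r))\<^sup>2"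
    by (simp add: power_mult_distrib)
  moreover have "(norm (proj_perp A S r))\<^sup>2 = (norm r)\<^sup>2 - (norm (proj A S r))\<^sup>2" for S
    using norm_proj_pythagorean[of r A S] by simp
  ultimately have "(norm r)\<^sup>2 - (norm (proj A \<Gamma> r))\<^sup>2 \<le> \<eta>\<^sup>2 * (norm r)\<^sup>2 - \<eta>\<^sup>2 * (norm (proj A R r))\<^sup>2"
    by (simp add: right_diff_distrib)
  then have "\<eta>\<^sup>2 * (norm (proj A R r))\<^sup>2 \<le> (norm (proj A \<Gamma> r))\<^sup>2 + (\<eta>\<^sup>2 - 1) * (norm r)\<^sup>2"
    by (simp add: left_diff_distrib)
  then have "(norm (proj A R r))\<^sup>2 \<le> (norm (proj A \<Gamma> r) / \<eta>)\<^sup>2 + (sqrt (\<eta>\<^sup>2 - 1) / \<eta> * norm r)\<^sup>2"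
    using \<eta> by (simp add: power_divide power_mult_distrib field_simps one_le_power)
  also have "\<dots> \<le> (norm (proj A \<Gamma> r) / \<eta> + sqrt (\<eta>\<^sup>2 - 1) / \<eta> * norm r)\<^sup>2"
    using \<eta> by (simp add: power2_sum)
  finally show ?thesis
    by (rule power2_le_imp_le) (use \<eta> in simp)
qed

lemma neg_inner_le_approx:
  assumes "is_approx A d s r \<eta> \<Gamma>" "R \<subseteq> {..<d}" "card R \<le> s" "1 \<le> \<eta>" and \<Delta>: "\<Delta> \<in> span (A ` R)"
  shows "- (r \<bullet> \<Delta>) \<le> (norm (proj A \<Gamma> r) / \<eta> + sqrt (\<eta>\<^sup>2 - 1) / \<eta> * norm r) * norm \<Delta>"
proof -
  have "- (r \<bullet> \<Delta>) = - (proj A R r \<bullet> \<Delta>)"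
    by (simp add: inner_proj_left[OF \<Delta>])
  also have "\<dots> \<le> norm (proj A R r) * norm \<Delta>"
    using norm_cauchy_schwarz[of "- proj A R r" \<Delta>] by simp
  also have "\<dots> \<le> (norm (proj A \<Gamma> r) / \<eta> + sqrt (\<eta>\<^sup>2 - 1) / \<eta> * norm r) * norm \<Delta>"
    using norm_proj_le_approx[OF assms(1-4)] by (rule mult_right_mono) simp
  finally show ?thesis .
qed

definition max_proj_sq :: "(nat \<Rightarrow> 'a::euclidean_space) \<Rightarrow> nat \<Rightarrow> nat \<Rightarrow> 'a \<Rightarrow> real" where
  "max_proj_sq A d s g = Max {(norm (proj A \<Omega> g))\<^sup>2 | \<Omega>. \<Omega> \<subseteq> {..<d} \<and> card \<Omega> = s}"

lemma norm_proj_sq_le_max_proj_sq: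
  assumes "\<Omega> \<subseteq> {..<d}" "card \<Omega> = s"
  shows "(norm (proj A \<Omega> g))\<^sup>2 \<le> max_proj_sq A d s g"
proof -
  have "{(norm (proj A \<Omega> g))\<^sup>2 | \<Omega>. \<Omega> \<subseteq> {..<d} \<and> card \<Omega> = s}
      \<subseteq> (\<lambda>\<Omega>. (norm (proj A \<Omega> g))\<^sup>2) ` Pow {..<d}"
    by auto
  then have "finite {(norm (proj A \<Omega> g))\<^sup>2 | \<Omega>. \<Omega> \<subseteq> {..<d} \<and> card \<Omega> = s}"
    by (rule finite_subset) simp
  with assms show ?thesis
    unfolding max_proj_sq_def by (intro Max_ge) auto
qed

lemma max_proj_sq_nonneg:
  assumes "s \<le> d"
  shows "0 \<le> max_proj_sq A d s g"
proof -
  obtain \<Omega> where "\<Omega> \<subseteq> {..<d}" "card \<Omega> = s"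
    using obtain_superset_with_card[of "{}" d s] assms by auto
  from norm_proj_sq_le_max_proj_sq[OF this] show ?thesis
    by (rule order_trans[rotated]) simp
qed

lemma inner_le_max_proj_sq:
  assumes S: "S \<subseteq> {..<d}" "card S \<le> s" "s \<le> d" and v: "v \<in> span (A ` S)" and \<epsilon>: "0 < \<epsilon>"
  shows "g \<bullet> v \<le> \<epsilon> * (norm v)\<^sup>2 + max_proj_sq A d s g / (4 * \<epsilon>)"
proof -
  obtain \<Omega> where \<Omega>: "S \<subseteq> \<Omega>" "\<Omega> \<subseteq> {..<d}" "card \<Omega> = s"
    using obtain_superset_with_card[OF S] .
  have "v \<in> span (A ` \<Omega>)"
    using v span_mono[of "A ` S" "A ` \<Omega>"] \<Omega>(1) by auto
  then have "g \<bullet> v = proj A \<Omega> g \<bullet> v"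
    by (simp add: inner_proj_left)
  also have "\<dots> \<le> norm (proj A \<Omega> g) * norm v"
    by (rule norm_cauchy_schwarz)
  also have "\<dots> \<le> (norm (proj A \<Omega> g))\<^sup>2 / (4 * \<epsilon>) + \<epsilon> * (norm v)\<^sup>2"
    using \<epsilon> by (rule mult_le_weighted_squares)
  also have "\<dots> \<le> max_proj_sq A d s g / (4 * \<epsilon>) + \<epsilon> * (norm v)\<^sup>2"
    using divide_right_mono[OF norm_proj_sq_le_max_proj_sq[OF \<Omega>(2,3)], of "4 * \<epsilon>"] \<epsilon>
    by simp
  finally show ?thesis by simp
qed

section \<open>Smoothness and restricted convexity\<close>

lemma descent_lemma:
  fixes f :: "'a::real_inner \<Rightarrow> real"
  assumes grad: "\<And>y. (f has_derivative (\<lambda>h. F y \<bullet> h)) (at y)"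
    and lip: "\<And>t. 0 \<le> t \<Longrightarrow> t \<le> 1 \<Longrightarrow> norm (F (x + t *\<^sub>R v) - F x) \<le> L * t * norm v"
  shows "f (x + v) \<le> f x + F x \<bullet> v + L / 2 * (norm v)\<^sup>2"
proof -
  define \<psi> where "\<psi> t = f (x + t *\<^sub>R v) - t * (F x \<bullet> v) - L / 2 * t\<^sup>2 * (norm v)\<^sup>2" for t
  have line: "((\<lambda>t. f (x + t *\<^sub>R v)) has_real_derivative F (x + t *\<^sub>R v) \<bullet> v) (at t)" for t
  proof -
    have "((\<lambda>t. x + t *\<^sub>R v) has_derivative (\<lambda>h. h *\<^sub>R v)) (at t)"
      by (auto intro!: derivative_eq_intros)
    from has_derivative_compose[OF this grad]
    show ?thesis
      unfolding has_field_derivative_def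
      by (rule has_derivative_eq_rhs) (simp add: fun_eq_iff inner_scaleR_right)
  qed
  have "\<psi> 1 \<le> \<psi> 0"
  proof (rule DERIV_nonpos_imp_nonincreasing[of 0 1 \<psi>])
    fix t :: real assume t: "0 \<le> t" "t \<le> 1"
    have "(\<psi> has_real_derivative (F (x + t *\<^sub>R v) - F x) \<bullet> v - L * t * (norm v)\<^sup>2) (at t)"
      unfolding \<psi>_def by (auto intro!: derivative_eq_intros line simp: inner_diff_left)
    moreover have "(F (x + t *\<^sub>R v) - F x) \<bullet> v \<le> L * t * (norm v)\<^sup>2"
      using norm_cauchy_schwarz[of "F (x + t *\<^sub>R v) - F x" v] lip[OF t]
        mult_right_mono[OF lip[OF t] norm_ge_zero[of v]]
      by (simp add: power2_eq_square mult.assoc)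
    ultimately show "\<exists>y. (\<psi> has_real_derivative y) (at t) \<and> y \<le> 0" by auto
  qed simp
  then show ?thesis unfolding \<psi>_def by simp
qed

lemma strong_convexity_le_lipschitz:
  fixes f :: "'a::real_inner \<Rightarrow> real"
  assumes "\<rho> / 2 * (norm (y - z))\<^sup>2 \<le> f y - f z - F z \<bullet> (y - z)"
    and "\<rho> / 2 * (norm (z - y))\<^sup>2 \<le> f z - f y - F y \<bullet> (z - y)"
    and "norm (F y - F z) \<le> L * norm (y - z)" and "y \<noteq> z"
  shows "\<rho> \<le> L"
proof -
  have "\<rho> * (norm (y - z))\<^sup>2 \<le> (F y - F z) \<bullet> (y - z)"
    using assms(1,2) by (simp add: norm_minus_commute inner_diff_left inner_diff_right inner_commute)
  also have "\<dots> \<le> norm (F y - F z) * norm (y - z)"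
    by (rule norm_cauchy_schwarz)
  also have "\<dots> \<le> L * (norm (y - z))\<^sup>2"
    using mult_right_mono[OF assms(3) norm_ge_zero[of "y - z"]] by (simp add: power2_eq_square)
  finally show ?thesis
    using assms(4) by simp
qed

lemma loc_f_has_derivative:
  assumes "\<forall>j<M. \<forall>y. (g i j has_derivative (\<lambda>h. G i j y \<bullet> h)) (at y)"
  shows "(loc_f M g i has_derivative (\<lambda>h. loc_grad M G i y \<bullet> h)) (at y)"
proof -
  have "((\<lambda>y. (1 / real M) * (\<Sum>j<M. g i j y))
      has_derivative (\<lambda>h. (1 / real M) * (\<Sum>j<M. G i j y \<bullet> h))) (at y)"
    using assms by (intro has_derivative_mult_right has_derivative_sum) auto
  then show ?thesis
    unfolding loc_f_def[abs_def] loc_grad_def by (simp add: inner_sum_left)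
qed

lemma norm_loc_grad_diff_le:
  assumes "\<And>j. j < M \<Longrightarrow> norm (G i j y - G i j z) \<le> L j * norm (y - z)"
  shows "norm (loc_grad M G i y - loc_grad M G i z) \<le> (1 / real M) * (\<Sum>j<M. L j) * norm (y - z)"
proof -
  have "norm (loc_grad M G i y - loc_grad M G i z) = (1 / real M) * norm (\<Sum>j<M. G i j y - G i j z)"
    unfolding loc_grad_def by (simp add: sum_subtractf flip: scaleR_diff_right)
  also have "\<dots> \<le> (1 / real M) * (\<Sum>j<M. L j * norm (y - z))"
    using assms by (intro mult_left_mono order_trans[OF norm_sum sum_mono]) auto
  finally show ?thesis
    by (simp add: sum_distrib_right mult.assoc)
qed

section \<open>Choice of the Young parameter\<close>

lemma selection_constant_bounds:
  assumes "1 \<le> \<eta>"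
  shows "0 \<le> sqrt (\<eta>\<^sup>2 - 1) / \<eta>" "(sqrt (\<eta>\<^sup>2 - 1) / \<eta>)\<^sup>2 = 1 - 1 / \<eta>\<^sup>2"
    "sqrt (\<eta>\<^sup>2 - 1) / \<eta> \<le> 1"
proof -
  have "1 \<le> \<eta>\<^sup>2"
    using assms by (simp add: one_le_power)
  then show nonneg: "0 \<le> sqrt (\<eta>\<^sup>2 - 1) / \<eta>" and sq: "(sqrt (\<eta>\<^sup>2 - 1) / \<eta>)\<^sup>2 = 1 - 1 / \<eta>\<^sup>2"
    using assms by (simp_all add: power_divide diff_divide_distrib)
  have "(sqrt (\<eta>\<^sup>2 - 1) / \<eta>)\<^sup>2 \<le> 1\<^sup>2"
    unfolding sq by simp
  then show "sqrt (\<eta>\<^sup>2 - 1) / \<eta> \<le> 1"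
    by (rule power2_le_imp_le) simp
qed

lemma three_case_bound:
  fixes \<rho> m K e D X H P :: real
  assumes \<rho>: "0 < \<rho>" and m: "0 \<le> m" and K: "0 \<le> K" and trivial: "e \<le> D\<^sup>2"
    and quarter: "\<rho> / 4 * e \<le> X + H + K + m / \<rho>"
    and tenth: "2 * \<rho> / 5 * e \<le> X + H + K + 5 * m / (2 * \<rho>)"
    and cases: "H \<le> P \<or> \<rho> * D\<^sup>2 \<le> 4 * (X + P) \<or> 5 / 2 * (H - P) \<le> 3 / 2 * (X + P)"
  shows "e \<le> 4 / \<rho> * (X + P + K) + 8 * m / \<rho>\<^sup>2"
proof -
  have m_terms: "4 * m / \<rho>\<^sup>2 \<le> 8 * m / \<rho>\<^sup>2" "25 * m / (4 * \<rho>\<^sup>2) \<le> 8 * m / \<rho>\<^sup>2"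
    using m \<rho> by (simp_all add: divide_right_mono field_simps)
  from cases consider "H \<le> P" | "\<rho> * D\<^sup>2 \<le> 4 * (X + P)" | "5 / 2 * (H - P) \<le> 3 / 2 * (X + P)"
    by blast
  then show ?thesis
  proof cases
    case 1
    have "e \<le> 4 / \<rho> * (X + H + K) + 4 * m / \<rho>\<^sup>2"
      using quarter \<rho> by (simp add: field_simps power2_eq_square)
    also have "\<dots> \<le> 4 / \<rho> * (X + P + K) + 4 * m / \<rho>\<^sup>2"
      using 1 \<rho> by (simp add: field_simps)
    finally show ?thesis
      using m_terms by simp
  next
    case 2
    have "e \<le> 4 / \<rho> * (X + P)"
    proof -
      have "\<rho> * e \<le> \<rho> * D\<^sup>2"
        using trivial \<rho> by (intro mult_left_mono) simp_all
      with 2 have "e * \<rho> \<le> 4 * (X + P)"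
        by (simp add: mult.commute)
      with \<rho> show ?thesis
        by (simp add: pos_le_divide_eq)
    qed
    also have "\<dots> \<le> 4 / \<rho> * (X + P + K) + 8 * m / \<rho>\<^sup>2"
      using K m \<rho> by (simp add: field_simps)
    finally show ?thesis .
  next
    case 3
    have "e \<le> 5 / (2 * \<rho>) * (X + H + K) + 25 * m / (4 * \<rho>\<^sup>2)"
      using tenth \<rho> by (simp add: field_simps power2_eq_square)
    also have "\<dots> \<le> 4 / \<rho> * (X + P + K) + 25 * m / (4 * \<rho>\<^sup>2)"
    proof -
      have "5 / 2 * (X + H + K) \<le> 4 * (X + P + K)"
        using 3 K by (simp add: algebra_simps)
      then have "5 / 2 * (X + H + K) / \<rho> \<le> 4 * (X + P + K) / \<rho>"
        using \<rho> by (intro divide_right_mono) simp_all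
      then show ?thesis
        by simp
    qed
    finally show ?thesis
      using m_terms by simp
  qed
qed

(* Y < rho forces c < 5/24 and then L < 1.57 rho, which leaves room to absorb the cross terms. *)
lemma small_selection_constant_case:
  fixes c \<rho> L E :: real
  defines "Y \<equiv> 2 * L * (1 - c\<^sup>2) - 2 * \<rho> + 2 * c * (3 * E + 1)"
  assumes c: "0 \<le> c" "c \<le> 1" and \<rho>: "0 < \<rho>" and E: "\<rho>\<^sup>2 \<le> E" and L: "\<rho> \<le> L" and Y: "Y < \<rho>"
  shows "5 / 2 * c * (L - 3 / 2 * E - 1 / 6) \<le> 3 / 8 * Y"
proof -
  have E1: "17 / 5 * \<rho> \<le> 3 * E + 1" and E2: "26 / 5 * \<rho> \<le> 6 * E + 7 / 6"
    using E sum_squares_ge_zero[of "\<rho> - 17 / 30" 0] sum_squares_ge_zero[of "\<rho> - 13 / 30" 0]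
    by (simp_all add: power2_eq_square algebra_simps)
  have "24 / 5 * c * \<rho> \<le> Y"
  proof -
    have "\<rho> * (1 - c\<^sup>2) \<le> L * (1 - c\<^sup>2)"
      using L c by (intro mult_right_mono) (simp_all add: power_le_one)
    moreover have "c * (17 / 5 * \<rho>) \<le> c * (3 * E + 1)"
      using E1 c(1) by (rule mult_left_mono)
    moreover have "\<rho> * c\<^sup>2 \<le> \<rho> * c"
      using c \<rho> by (simp add: power2_eq_square mult_left_le)
    ultimately show ?thesis
      unfolding Y_def by (simp add: algebra_simps)
  qed
  with Y have "24 / 5 * c * \<rho> < 1 * \<rho>"
    by simp
  then have c_small: "c < 5 / 24"
    using mult_right_less_imp_less[of "24 / 5 * c" \<rho> 1] \<rho> by linarith
  have "L * (1 - c\<^sup>2) < 3 / 2 * \<rho>"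
  proof -
    have "0 \<le> c * (3 * E + 1)"
      using c E1 \<rho> by simp
    then show ?thesis
      using Y unfolding Y_def by linarith
  qed
  moreover have "551 / 576 * L \<le> L * (1 - c\<^sup>2)"
  proof -
    have "c\<^sup>2 \<le> (5 / 24)\<^sup>2"
      using c_small c by (intro power_mono) simp_all
    then have "L * c\<^sup>2 \<le> L * (5 / 24)\<^sup>2"
      using L \<rho> by (intro mult_left_mono) simp_all
    then show ?thesis
      by (simp add: algebra_simps power2_eq_square)
  qed
  ultimately have "L \<le> 157 / 100 * \<rho>"
    using \<rho> by linarith
  moreover have "L * c \<le> L * (5 / 24)"
    using c_small L \<rho> by (intro mult_left_mono) simp_all
  ultimately have "5 / 2 * L + 3 / 4 * L * c - 6 * E - 7 / 6 \<le> 0"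
    using E2 \<rho> by simp
  from mult_nonneg_nonpos[OF c(1) this]
  show ?thesis
    unfolding Y_def using L by (simp add: algebra_simps power2_eq_square)
qed

lemma cross_terms_le_squares:
  fixes c D g s L E :: real
  assumes "0 \<le> c"
  shows "c * D * (g + s + L * D) - c / 2 * ((3 * E + 1) * D\<^sup>2 + 3 * s\<^sup>2 + 3 * g\<^sup>2)
    \<le> c * (L - 3 / 2 * E - 1 / 6) * D\<^sup>2"
proof -
  have "D * g \<le> 3 / 2 * g\<^sup>2 + D\<^sup>2 / 6" "D * s \<le> 3 / 2 * s\<^sup>2 + D\<^sup>2 / 6"
    using mult_le_weighted_squares[of "3 / 2" D g] mult_le_weighted_squares[of "3 / 2" D s]
    by simp_all
  then have "D * (g + s + L * D) - 1 / 2 * ((3 * E + 1) * D\<^sup>2 + 3 * s\<^sup>2 + 3 * g\<^sup>2)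
      \<le> (L - 3 / 2 * E - 1 / 6) * D\<^sup>2"
    by (simp add: power2_eq_square algebra_simps)
  from mult_left_mono[OF this assms] show ?thesis
    by (simp add: algebra_simps)
qed

lemma residual_terms_lower_bound:
  fixes c \<eta> \<theta> \<rho> L E D g s :: real
  assumes \<eta>: "1 \<le> \<eta>" and c: "0 \<le> c" "c\<^sup>2 = 1 - 1 / \<eta>\<^sup>2"
  shows "(2 * L * (1 - c\<^sup>2) - 2 * \<rho> + 2 * c * (3 * E + 1)) * D\<^sup>2 / 4
    \<le> (L + 1 / \<theta>\<^sup>2) * D\<^sup>2 / (2 * \<eta>\<^sup>2) - \<rho> / 2 * D\<^sup>2 + c / 2 * ((3 * E + 1) * D\<^sup>2 + 3 * s\<^sup>2 + 3 * g\<^sup>2)"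
proof -
  have "L * (1 - c\<^sup>2) \<le> (L + 1 / \<theta>\<^sup>2) / \<eta>\<^sup>2"
    unfolding c(2) using \<eta> by (simp add: divide_right_mono)
  from mult_right_mono[OF this, of "D\<^sup>2"]
  have le: "L * (1 - c\<^sup>2) * D\<^sup>2 / 2 \<le> (L + 1 / \<theta>\<^sup>2) / \<eta>\<^sup>2 * D\<^sup>2 / 2"
    by simp
  have "(2 * L * (1 - c\<^sup>2) - 2 * \<rho> + 2 * c * (3 * E + 1)) * D\<^sup>2 / 4
      = L * (1 - c\<^sup>2) * D\<^sup>2 / 2 - \<rho> / 2 * D\<^sup>2 + c / 2 * (3 * E + 1) * D\<^sup>2"
    by (simp add: field_simps)
  also have "\<dots> \<le> (L + 1 / \<theta>\<^sup>2) / \<eta>\<^sup>2 * D\<^sup>2 / 2 - \<rho> / 2 * D\<^sup>2 + c / 2 * (3 * E + 1) * D\<^sup>2"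
    using le by linarith
  also have "\<dots> \<le> (L + 1 / \<theta>\<^sup>2) * D\<^sup>2 / (2 * \<eta>\<^sup>2) - \<rho> / 2 * D\<^sup>2
      + c / 2 * ((3 * E + 1) * D\<^sup>2 + 3 * s\<^sup>2 + 3 * g\<^sup>2)"
    using c(1) by (simp add: algebra_simps)
  finally show ?thesis .
qed

lemma residual_case_split:
  fixes \<rho> L E \<theta> \<eta> D g s :: real
  defines "c \<equiv> sqrt (\<eta>\<^sup>2 - 1) / \<eta>"
  defines "X \<equiv> (L + 1 / \<theta>\<^sup>2) * D\<^sup>2 / (2 * \<eta>\<^sup>2) - \<rho> / 2 * D\<^sup>2"
    and "H \<equiv> c * D * (g + s + L * D)"
    and "P \<equiv> c / 2 * ((3 * E + 1) * D\<^sup>2 + 3 * s\<^sup>2 + 3 * g\<^sup>2)"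
  assumes \<rho>: "0 < \<rho>" and \<eta>: "1 \<le> \<eta>" and E: "\<rho>\<^sup>2 \<le> E" and L: "\<rho> \<le> L"
  shows "H \<le> P \<or> \<rho> * D\<^sup>2 \<le> 4 * (X + P) \<or> 5 / 2 * (H - P) \<le> 3 / 2 * (X + P)"
proof -
  define Y where "Y = 2 * L * (1 - c\<^sup>2) - 2 * \<rho> + 2 * c * (3 * E + 1)"
  have c: "0 \<le> c" "c\<^sup>2 = 1 - 1 / \<eta>\<^sup>2" "c \<le> 1"
    unfolding c_def using selection_constant_bounds[OF \<eta>] by simp_all
  have HP: "H - P \<le> c * (L - 3 / 2 * E - 1 / 6) * D\<^sup>2"
    unfolding H_def P_def using cross_terms_le_squares[OF c(1)] .
  have XP: "Y * D\<^sup>2 / 4 \<le> X + P"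
    unfolding X_def P_def Y_def using residual_terms_lower_bound[OF \<eta> c(1,2)] .
  consider "L \<le> 3 / 2 * E + 1 / 6" | "\<rho> \<le> Y" | "Y < \<rho>"
    by linarith
  then show ?thesis
  proof cases
    case 1
    then have "c * (L - 3 / 2 * E - 1 / 6) * D\<^sup>2 \<le> 0"
      using c(1) by (simp add: mult_nonneg_nonpos mult_nonpos_nonneg)
    with HP show ?thesis
      by simp
  next
    case 2
    then have "\<rho> * D\<^sup>2 \<le> Y * D\<^sup>2"
      by (simp add: mult_right_mono)
    with XP show ?thesis
      by simp
  next
    case 3
    have "5 / 2 * c * (L - 3 / 2 * E - 1 / 6) \<le> 3 / 8 * Y"
      using small_selection_constant_case[OF c(1,3) \<rho> E L] 3 by (simp add: Y_def)
    from mult_right_mono[OF this, of "D\<^sup>2"]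
    have "5 / 2 * (c * (L - 3 / 2 * E - 1 / 6) * D\<^sup>2) \<le> 3 / 2 * (Y * D\<^sup>2 / 4)"
      by simp
    moreover have "5 / 2 * (H - P) \<le> 5 / 2 * (c * (L - 3 / 2 * E - 1 / 6) * D\<^sup>2)"
      using HP by (rule mult_left_mono) simp
    moreover have "3 / 2 * (Y * D\<^sup>2 / 4) \<le> 3 / 2 * (X + P)"
      using XP by (rule mult_left_mono) simp
    ultimately show ?thesis
      by linarith
  qed
qed

lemma residual_bound_arith:
  fixes \<rho> L E \<theta> \<eta> D g s m e :: real
  defines "c \<equiv> sqrt (\<eta>\<^sup>2 - 1) / \<eta>"
  assumes \<rho>: "0 < \<rho>" and \<eta>: "1 \<le> \<eta>" and m: "0 \<le> m"
    and E: "\<rho>\<^sup>2 \<le> E" and L: "\<rho> \<le> L" and trivial: "e \<le> D\<^sup>2"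
    and descent: "\<And>\<epsilon>. 0 < \<epsilon> \<Longrightarrow> \<epsilon> \<le> \<rho> / 2 \<Longrightarrow> (\<rho> / 2 - \<epsilon>) * e
      \<le> (L + 1 / \<theta>\<^sup>2) * D\<^sup>2 / (2 * \<eta>\<^sup>2) - \<rho> / 2 * D\<^sup>2 + c * D * (g + s + L * D)
        + \<theta>\<^sup>2 / 2 * s\<^sup>2 + m / (4 * \<epsilon>)"
  shows "e \<le> (2 * ((L + 1 / \<theta>\<^sup>2) - \<eta>\<^sup>2 * \<rho>) / (\<eta>\<^sup>2 * \<rho>)
      + 2 * sqrt (\<eta>\<^sup>2 - 1) / (\<eta> * \<rho>) * (3 * E + 1)) * D\<^sup>2
    + (8 / \<rho>\<^sup>2 * m + 1 / \<rho> * ((2 * \<theta>\<^sup>2 + 6 * c) * s\<^sup>2 + 6 * c * g\<^sup>2))"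
proof -
  define X where "X = (L + 1 / \<theta>\<^sup>2) * D\<^sup>2 / (2 * \<eta>\<^sup>2) - \<rho> / 2 * D\<^sup>2"
  define H where "H = c * D * (g + s + L * D)"
  define P where "P = c / 2 * ((3 * E + 1) * D\<^sup>2 + 3 * s\<^sup>2 + 3 * g\<^sup>2)"
  define K where "K = \<theta>\<^sup>2 / 2 * s\<^sup>2"
  have "e \<le> 4 / \<rho> * (X + P + K) + 8 * m / \<rho>\<^sup>2"
  proof (rule three_case_bound[OF \<rho> m _ trivial])
    show "0 \<le> K"
      unfolding K_def by simp
    show "\<rho> / 4 * e \<le> X + H + K + m / \<rho>"
      using descent[of "\<rho> / 4"] \<rho> unfolding X_def H_def K_def by simp
    show "2 * \<rho> / 5 * e \<le> X + H + K + 5 * m / (2 * \<rho>)"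
      using descent[of "\<rho> / 10"] \<rho> unfolding X_def H_def K_def by simp
    show "H \<le> P \<or> \<rho> * D\<^sup>2 \<le> 4 * (X + P) \<or> 5 / 2 * (H - P) \<le> 3 / 2 * (X + P)"
      unfolding X_def H_def P_def c_def using residual_case_split[OF \<rho> \<eta> E L] .
  qed
  also have "\<dots> = (2 * ((L + 1 / \<theta>\<^sup>2) - \<eta>\<^sup>2 * \<rho>) / (\<eta>\<^sup>2 * \<rho>)
      + 2 * sqrt (\<eta>\<^sup>2 - 1) / (\<eta> * \<rho>) * (3 * E + 1)) * D\<^sup>2
    + (8 / \<rho>\<^sup>2 * m + 1 / \<rho> * ((2 * \<theta>\<^sup>2 + 6 * c) * s\<^sup>2 + 6 * c * g\<^sup>2))"
    unfolding X_def P_def K_def c_def using \<rho> \<eta> by (simp add: field_simps power2_eq_square)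
  finally show ?thesis .
qed

section \<open>One local step of a client\<close>

(* f, F, rho and L stand for f_i, its gradient, rho^-_4tau(i) and the mean of the
   rho^+_4tau(i, j). *)
locale sparse_objective =
  fixes A :: "nat \<Rightarrow> 'a::euclidean_space" and d \<tau> :: nat
    and f :: "'a \<Rightarrow> real" and F :: "'a \<Rightarrow> 'a" and \<rho> L :: real
  assumes dim: "4 * \<tau> \<le> d"
    and gradient: "(f has_derivative (\<lambda>h. F y \<bullet> h)) (at y)"
    and restricted_convexity: "sparse_wrt A d (4 * \<tau>) (y - z) \<Longrightarrow>
      \<rho> / 2 * (norm (y - z))\<^sup>2 \<le> f y - f z - F z \<bullet> (y - z)"
    and restricted_lipschitz: "sparse_wrt A d (4 * \<tau>) (y - z) \<Longrightarrow>
      norm (F y - F z) \<le> L * norm (y - z)"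
    and convexity_pos: "0 < \<rho>"
begin

lemma convexity_le_lipschitz:
  assumes lip: "\<And>y z. sparse_wrt A d s (y - z) \<Longrightarrow> norm (F y - F z) \<le> L' * norm (y - z)"
    and s: "s \<le> 4 * \<tau>" and v: "sparse_wrt A d s v" "v \<noteq> 0"
  shows "\<rho> \<le> L'"
proof (rule strong_convexity_le_lipschitz[where f = f and F = F and y = v and z = 0])
  have "sparse_wrt A d (4 * \<tau>) v" "sparse_wrt A d (4 * \<tau>) (- v)"
    using sparse_wrt_mono[OF v(1) s] sparse_wrt_mono[OF sparse_wrt_uminus[OF v(1)] s] .
  then show "\<rho> / 2 * (norm (v - 0))\<^sup>2 \<le> f v - f 0 - F 0 \<bullet> (v - 0)"
    and "\<rho> / 2 * (norm (0 - v))\<^sup>2 \<le> f 0 - f v - F v \<bullet> (0 - v)"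
    using restricted_convexity[of v 0] restricted_convexity[of 0 v] by simp_all
  show "norm (F v - F 0) \<le> L' * norm (v - 0)"
    using lip[of v 0] v(1) by simp
qed (use v(2) in simp)

lemma convexity_sq_le_mean_sq:
  fixes l :: "nat \<Rightarrow> real"
  assumes M: "0 < M"
    and lip: "\<And>y z. sparse_wrt A d \<tau> (y - z) \<Longrightarrow>
      norm (F y - F z) \<le> (1 / real M) * (\<Sum>j<M. l j) * norm (y - z)"
    and v: "sparse_wrt A d \<tau> v" "v \<noteq> 0"
  shows "\<rho>\<^sup>2 \<le> (1 / real M) * (\<Sum>j<M. (l j)\<^sup>2)"
proof -
  have "\<rho> \<le> (1 / real M) * (\<Sum>j<M. l j)"
    using convexity_le_lipschitz[OF lip _ v] by simp
  then have "\<rho>\<^sup>2 \<le> ((1 / real M) * (\<Sum>j<M. l j))\<^sup>2"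
    using convexity_pos by (intro power_mono) auto
  also have "\<dots> \<le> (1 / real M) * (\<Sum>j<M. (l j)\<^sup>2)"
    by (rule mean_squared_le_mean_of_squares[OF M])
  finally show ?thesis .
qed

lemma three_point_bound:
  assumes S: "S \<subseteq> {..<d}" "card S \<le> 4 * \<tau>" and span: "p \<in> span (A ` S)" "xs - x \<in> span (A ` S)"
  shows "\<rho> / 2 * (norm (xs - x - p))\<^sup>2
    \<le> F x \<bullet> (p - (xs - x)) + L / 2 * (norm p)\<^sup>2 - \<rho> / 2 * (norm (xs - x))\<^sup>2 + F xs \<bullet> (xs - x - p)"
proof -
  have sparse: "\<And>v. v \<in> span (A ` S) \<Longrightarrow> sparse_wrt A d (4 * \<tau>) v"
    using sparse_wrt_of_span[OF S] .
  have descent: "f (x + p) \<le> f x + F x \<bullet> p + L / 2 * (norm p)\<^sup>2"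
  proof (rule descent_lemma[OF gradient])
    fix t :: real assume "0 \<le> t"
    then show "norm (F (x + t *\<^sub>R p) - F x) \<le> L * t * norm p"
      using restricted_lipschitz[of "x + t *\<^sub>R p" x] sparse[OF span_scale[OF span(1)]] by simp
  qed
  have step: "x + p - xs = - (xs - x - p)"
    by simp
  have "x + p - xs \<in> span (A ` S)"
    unfolding step using span_neg[OF span_diff[OF span(2,1)]] .
  from restricted_convexity[OF sparse[OF this]]
  have "\<rho> / 2 * (norm (xs - x - p))\<^sup>2 \<le> f (x + p) - f xs + F xs \<bullet> (xs - x - p)"
    unfolding step by (simp only: norm_minus_cancel inner_minus_right diff_minus_eq_add)
  moreover have "\<rho> / 2 * (norm (xs - x))\<^sup>2 \<le> f xs - f x - F x \<bullet> (xs - x)"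
    using restricted_convexity[OF sparse[OF span(2)]] .
  moreover have "F x \<bullet> (p - (xs - x)) = F x \<bullet> p - F x \<bullet> (xs - x)"
    by (rule inner_diff_right)
  ultimately show ?thesis
    using descent by linarith
qed

lemma sample_step_bound:
  assumes R: "R \<subseteq> {..<d}" "card R \<le> 2 * \<tau>" "x \<in> span (A ` R)" "xs \<in> span (A ` R)"
    and \<Gamma>: "is_approx A d (2 * \<tau>) r \<eta> \<Gamma>"
    and \<eta>: "1 \<le> \<eta>" and \<theta>: "0 < \<theta>" and L: "\<rho> \<le> L" and \<epsilon>: "0 < \<epsilon>"
  defines "c \<equiv> L + 1 / \<theta>\<^sup>2"
  shows "(\<rho> / 2 - \<epsilon>) * (norm (xs - x + (1 / c) *\<^sub>R proj A \<Gamma> r))\<^sup>2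
    \<le> c * (norm (xs - x))\<^sup>2 / (2 * \<eta>\<^sup>2) - \<rho> / 2 * (norm (xs - x))\<^sup>2
      + sqrt (\<eta>\<^sup>2 - 1) / \<eta> * norm (xs - x) * norm r + \<theta>\<^sup>2 / 2 * (norm (r - F x))\<^sup>2
      + (r - F x) \<bullet> (xs - x) + max_proj_sq A d (4 * \<tau>) (F xs) / (4 * \<epsilon>)"
proof -
  define q where "q = proj A \<Gamma> r"
  define p where "p = - (1 / c) *\<^sub>R q"
  define \<Delta> where "\<Delta> = xs - x"
  have S: "\<Gamma> \<union> R \<subseteq> {..<d}" "card (\<Gamma> \<union> R) \<le> 4 * \<tau>"
    using \<Gamma> R card_Un_le[of \<Gamma> R] unfolding is_approx_def by auto
  have \<Delta>_R: "\<Delta> \<in> span (A ` R)"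
    unfolding \<Delta>_def using R(3,4) by (rule span_diff[rotated])
  have spans: "span (A ` R) \<subseteq> span (A ` (\<Gamma> \<union> R))" "span (A ` \<Gamma>) \<subseteq> span (A ` (\<Gamma> \<union> R))"
    by (simp_all add: image_mono span_mono)
  have \<Delta>_S: "\<Delta> \<in> span (A ` (\<Gamma> \<union> R))"
    using \<Delta>_R spans by auto
  have p_S: "p \<in> span (A ` (\<Gamma> \<union> R))"
    unfolding p_def q_def using proj_in_span[of A \<Gamma> r] spans by (intro span_scale) auto
  have "\<rho> / 2 * (norm (\<Delta> - p))\<^sup>2
      \<le> F x \<bullet> (p - \<Delta>) + L / 2 * (norm p)\<^sup>2 - \<rho> / 2 * (norm \<Delta>)\<^sup>2 + F xs \<bullet> (\<Delta> - p)"
    using three_point_bound[OF S p_S] \<Delta>_S unfolding \<Delta>_def by simp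
  moreover have "F xs \<bullet> (\<Delta> - p) \<le> \<epsilon> * (norm (\<Delta> - p))\<^sup>2 + max_proj_sq A d (4 * \<tau>) (F xs) / (4 * \<epsilon>)"
    using inner_le_max_proj_sq[OF S dim span_diff[OF \<Delta>_S p_S] \<epsilon>] .
  moreover have "F x \<bullet> (p - \<Delta>) + L / 2 * (norm p)\<^sup>2 \<le> c * (norm \<Delta>)\<^sup>2 / (2 * \<eta>\<^sup>2)
      + sqrt (\<eta>\<^sup>2 - 1) / \<eta> * norm \<Delta> * norm r + \<theta>\<^sup>2 / 2 * (norm (r - F x))\<^sup>2 + (r - F x) \<bullet> \<Delta>"
    unfolding p_def c_def
  proof (rule descent_step_terms_le)
    show "0 < L + 1 / \<theta>\<^sup>2"
      using L \<theta> convexity_pos by (simp add: add_pos_nonneg)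
    show "r \<bullet> q = (norm q)\<^sup>2"
      using inner_proj_left[OF proj_in_span, of A \<Gamma> r] by (simp add: q_def power2_norm_eq_inner)
    show "- (r \<bullet> \<Delta>) \<le> norm q * norm \<Delta> / \<eta> + sqrt (\<eta>\<^sup>2 - 1) / \<eta> * norm \<Delta> * norm r"
      using neg_inner_le_approx[OF \<Gamma> R(1,2) \<eta> \<Delta>_R] unfolding q_def by (simp add: algebra_simps)
  qed (use \<theta> in simp)
  moreover have "(\<rho> / 2 - \<epsilon>) * (norm (\<Delta> - p))\<^sup>2 = \<rho> / 2 * (norm (\<Delta> - p))\<^sup>2 - \<epsilon> * (norm (\<Delta> - p))\<^sup>2"
    by (simp add: left_diff_distrib)
  ultimately have "(\<rho> / 2 - \<epsilon>) * (norm (\<Delta> - p))\<^sup>2 \<le> c * (norm \<Delta>)\<^sup>2 / (2 * \<eta>\<^sup>2) - \<rho> / 2 * (norm \<Delta>)\<^sup>2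
      + sqrt (\<eta>\<^sup>2 - 1) / \<eta> * norm \<Delta> * norm r + \<theta>\<^sup>2 / 2 * (norm (r - F x))\<^sup>2 + (r - F x) \<bullet> \<Delta>
      + max_proj_sq A d (4 * \<tau>) (F xs) / (4 * \<epsilon>)"
    by linarith
  moreover have "\<Delta> - p = xs - x + (1 / c) *\<^sub>R proj A \<Gamma> r"
    unfolding \<Delta>_def p_def q_def by simp
  ultimately show ?thesis
    unfolding \<Delta>_def by simp
qed

lemma sample_residual_bound:
  assumes R: "\<Lambda> \<subseteq> R" "R \<subseteq> {..<d}" "card R \<le> 2 * \<tau>" "xs \<in> span (A ` R)"
    and x: "x \<in> span (A ` \<Lambda>)" and \<Gamma>: "is_approx A d (2 * \<tau>) r \<eta> \<Gamma>" and b: "b \<in> span (A ` (\<Gamma> \<union> \<Lambda>))"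
    and \<eta>: "1 \<le> \<eta>" and \<theta>: "0 < \<theta>" and L: "\<rho> \<le> L" and \<epsilon>: "0 < \<epsilon>" "\<epsilon> \<le> \<rho> / 2"
  shows "(\<rho> / 2 - \<epsilon>) * (norm (proj_perp A (\<Gamma> \<union> \<Lambda>) (b - xs)))\<^sup>2
    \<le> (L + 1 / \<theta>\<^sup>2) * (norm (xs - x))\<^sup>2 / (2 * \<eta>\<^sup>2) - \<rho> / 2 * (norm (xs - x))\<^sup>2
      + sqrt (\<eta>\<^sup>2 - 1) / \<eta> * norm (xs - x) * norm r + \<theta>\<^sup>2 / 2 * (norm (r - F x))\<^sup>2
      + (r - F x) \<bullet> (xs - x) + max_proj_sq A d (4 * \<tau>) (F xs) / (4 * \<epsilon>)"
proof -
  define u where "u = x - (1 / (L + 1 / \<theta>\<^sup>2)) *\<^sub>R proj A \<Gamma> r"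
  have "u \<in> span (A ` (\<Gamma> \<union> \<Lambda>))"
    using x proj_in_span[of A \<Gamma> r] span_mono[of "A ` \<Lambda>" "A ` (\<Gamma> \<union> \<Lambda>)"]
      span_mono[of "A ` \<Gamma>" "A ` (\<Gamma> \<union> \<Lambda>)"]
    unfolding u_def by (intro span_diff span_scale) auto
  have x_R: "x \<in> span (A ` R)"
    using x R(1) span_mono[of "A ` \<Lambda>" "A ` R"] by auto
  from norm_proj_perp_diff_le[OF b \<open>u \<in> _\<close>]
  have "(\<rho> / 2 - \<epsilon>) * (norm (proj_perp A (\<Gamma> \<union> \<Lambda>) (b - xs)))\<^sup>2 \<le> (\<rho> / 2 - \<epsilon>) * (norm (xs - u))\<^sup>2"
    using \<epsilon>(2) by (intro mult_left_mono power_mono) auto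
  also have "xs - u = xs - x + (1 / (L + 1 / \<theta>\<^sup>2)) *\<^sub>R proj A \<Gamma> r"
    unfolding u_def by simp
  also note sample_step_bound[OF R(2,3) x_R R(4) \<Gamma> \<eta> \<theta> L \<epsilon>(1)]
  finally show ?thesis .
qed

lemma norm_gradient_le:
  assumes "R \<subseteq> {..<d}" "card R \<le> 2 * \<tau>" "x \<in> span (A ` R)" "xs \<in> span (A ` R)"
  shows "norm (F x) \<le> norm (F xs) + L * norm (xs - x)"
proof -
  have "sparse_wrt A d (4 * \<tau>) (x - xs)"
    using sparse_wrt_of_span[OF assms(1) _ span_diff[OF assms(3,4)]] assms(2) by simp
  then have "norm (F x - F xs) \<le> L * norm (xs - x)"
    using restricted_lipschitz by (simp add: norm_minus_commute)
  then show ?thesis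
    using norm_triangle_sub[of "F x" "F xs"] by linarith
qed

lemma mean_residual_bound:
  fixes r b :: "nat \<Rightarrow> 'a" and \<Gamma> :: "nat \<Rightarrow> nat set"
  assumes M: "0 < M"
    and R: "\<Lambda> \<subseteq> R" "R \<subseteq> {..<d}" "card R \<le> 2 * \<tau>" "xs \<in> span (A ` R)" and x: "x \<in> span (A ` \<Lambda>)"
    and \<Gamma>: "\<And>j. j < M \<Longrightarrow> is_approx A d (2 * \<tau>) (r j) \<eta> (\<Gamma> j)"
    and b: "\<And>j. j < M \<Longrightarrow> b j \<in> span (A ` (\<Gamma> j \<union> \<Lambda>))"
    and mean: "(1 / real M) *\<^sub>R (\<Sum>j<M. r j) = F x"
    and variance: "(1 / real M) * (\<Sum>j<M. (norm (r j - F x))\<^sup>2) \<le> \<sigma>\<^sup>2"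
    and \<eta>: "1 \<le> \<eta>" and \<theta>: "0 < \<theta>" and L: "\<rho> \<le> L" and \<epsilon>: "0 < \<epsilon>" "\<epsilon> \<le> \<rho> / 2"
  shows "(\<rho> / 2 - \<epsilon>) * ((1 / real M) * (\<Sum>j<M. (norm (proj_perp A (\<Gamma> j \<union> \<Lambda>) (b j - xs)))\<^sup>2))
    \<le> (L + 1 / \<theta>\<^sup>2) * (norm (xs - x))\<^sup>2 / (2 * \<eta>\<^sup>2) - \<rho> / 2 * (norm (xs - x))\<^sup>2
      + sqrt (\<eta>\<^sup>2 - 1) / \<eta> * norm (xs - x) * (norm (F xs) + \<bar>\<sigma>\<bar> + L * norm (xs - x))
      + \<theta>\<^sup>2 / 2 * \<sigma>\<^sup>2 + max_proj_sq A d (4 * \<tau>) (F xs) / (4 * \<epsilon>)"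
proof -
  define D where "D = norm (xs - x)"
  define c where "c = sqrt (\<eta>\<^sup>2 - 1) / \<eta>"
  define K where "K = (L + 1 / \<theta>\<^sup>2) * D\<^sup>2 / (2 * \<eta>\<^sup>2) - \<rho> / 2 * D\<^sup>2
    + max_proj_sq A d (4 * \<tau>) (F xs) / (4 * \<epsilon>)"
  define avg where "avg h = (1 / real M) * (\<Sum>j<M. h j)" for h :: "nat \<Rightarrow> real"
  have avg_add: "avg (\<lambda>j. h j + h' j) = avg h + avg h'" for h h'
    unfolding avg_def by (simp add: sum.distrib distrib_left)
  have avg_const: "avg (\<lambda>j. k) = k" and avg_scale: "avg (\<lambda>j. k * h j) = k * avg h" for k h
    unfolding avg_def using M by (simp_all add: sum_distrib_left)
  have avg_inner: "avg (\<lambda>j. (r j - F x) \<bullet> v) = 0" for v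
    using mean M unfolding avg_def
    by (simp add: inner_sum_left[symmetric] sum_subtractf sum_constant_scaleR scaleR_diff_right
        flip: inner_scaleR_left)
  have x_R: "x \<in> span (A ` R)"
    using x R(1) span_mono[of "A ` \<Lambda>" "A ` R"] by auto
  have "(\<rho> / 2 - \<epsilon>) * avg (\<lambda>j. (norm (proj_perp A (\<Gamma> j \<union> \<Lambda>) (b j - xs)))\<^sup>2)
      = avg (\<lambda>j. (\<rho> / 2 - \<epsilon>) * (norm (proj_perp A (\<Gamma> j \<union> \<Lambda>) (b j - xs)))\<^sup>2)"
    by (simp only: avg_scale)
  also have "\<dots> \<le> avg (\<lambda>j. K + c * D * norm (r j) + \<theta>\<^sup>2 / 2 * (norm (r j - F x))\<^sup>2
      + (r j - F x) \<bullet> (xs - x))"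
    using sample_residual_bound[OF R x \<Gamma> b \<eta> \<theta> L \<epsilon>] unfolding avg_def K_def c_def D_def
    by (intro mult_left_mono sum_mono) (simp_all add: algebra_simps)
  also have "\<dots> = K + c * D * avg (\<lambda>j. norm (r j)) + \<theta>\<^sup>2 / 2 * avg (\<lambda>j. (norm (r j - F x))\<^sup>2)"
    by (simp only: avg_add avg_const avg_scale avg_inner add_0_right)
  also have "\<dots> \<le> K + c * D * (norm (F xs) + \<bar>\<sigma>\<bar> + L * D) + \<theta>\<^sup>2 / 2 * \<sigma>\<^sup>2"
  proof -
    have "avg (\<lambda>j. norm (r j)) \<le> norm (F xs) + \<bar>\<sigma>\<bar> + L * D"
      using mean_norm_le_of_variance[OF M variance] norm_gradient_le[OF R(2,3) x_R R(4)]
      unfolding avg_def D_def by linarith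
    then have "c * D * avg (\<lambda>j. norm (r j)) \<le> c * D * (norm (F xs) + \<bar>\<sigma>\<bar> + L * D)"
      using selection_constant_bounds(1)[OF \<eta>] unfolding c_def D_def
      by (intro mult_left_mono mult_nonneg_nonneg) auto
    moreover have "\<theta>\<^sup>2 / 2 * avg (\<lambda>j. (norm (r j - F x))\<^sup>2) \<le> \<theta>\<^sup>2 / 2 * \<sigma>\<^sup>2"
      using variance unfolding avg_def by (intro mult_left_mono) auto
    ultimately show ?thesis
      by simp
  qed
  finally show ?thesis
    unfolding avg_def K_def c_def D_def by simp
qed

lemma expected_residual_bound:
  fixes r b :: "nat \<Rightarrow> 'a" and \<Gamma> :: "nat \<Rightarrow> nat set" and \<eta> \<theta> \<sigma> E :: real
  defines "c \<equiv> sqrt (\<eta>\<^sup>2 - 1) / \<eta>"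
  assumes M: "0 < M"
    and \<Lambda>: "\<Lambda> \<subseteq> {..<d}" "card \<Lambda> \<le> \<tau>" "x \<in> span (A ` \<Lambda>)" and xs: "sparse_wrt A d \<tau> xs"
    and \<Gamma>: "\<And>j. j < M \<Longrightarrow> is_approx A d (2 * \<tau>) (r j) \<eta> (\<Gamma> j)"
    and b: "\<And>j. j < M \<Longrightarrow> b j \<in> span (A ` (\<Gamma> j \<union> \<Lambda>))"
    and mean: "(1 / real M) *\<^sub>R (\<Sum>j<M. r j) = F x"
    and variance: "(1 / real M) * (\<Sum>j<M. (norm (r j - F x))\<^sup>2) \<le> \<sigma>\<^sup>2"
    and \<eta>: "1 \<le> \<eta>" and \<theta>: "0 < \<theta>" and E: "x \<noteq> xs \<Longrightarrow> \<rho>\<^sup>2 \<le> E"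
  shows "(1 / real M) * (\<Sum>j<M. (norm (proj_perp A (\<Gamma> j \<union> \<Lambda>) (b j - xs)))\<^sup>2)
    \<le> (2 * ((L + 1 / \<theta>\<^sup>2) - \<eta>\<^sup>2 * \<rho>) / (\<eta>\<^sup>2 * \<rho>)
        + 2 * sqrt (\<eta>\<^sup>2 - 1) / (\<eta> * \<rho>) * (3 * E + 1)) * (norm (x - xs))\<^sup>2
      + (8 / \<rho>\<^sup>2 * max_proj_sq A d (4 * \<tau>) (F xs)
        + 1 / \<rho> * ((2 * \<theta>\<^sup>2 + 6 * c) * \<sigma>\<^sup>2 + 6 * c * (norm (F xs))\<^sup>2))"
    (is "?e \<le> _ * _ + ?\<xi>")
proof -
  obtain R where R: "\<Lambda> \<subseteq> R" "R \<subseteq> {..<d}" "card R \<le> 2 * \<tau>" "xs \<in> span (A ` R)"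
    using obtain_common_support[OF \<Lambda>(1,2) xs] .
  have trivial: "?e \<le> (norm (x - xs))\<^sup>2"
    using mean_residual_le_dist[OF M b \<Lambda>(3)] .
  show ?thesis
  proof (cases "x = xs")
    case True
    have "0 \<le> max_proj_sq A d (4 * \<tau>) (F xs)" "0 \<le> c"
      using max_proj_sq_nonneg[OF dim] selection_constant_bounds(1)[OF \<eta>] unfolding c_def .
    then have "0 \<le> ?\<xi>"
      using convexity_pos by (intro add_nonneg_nonneg mult_nonneg_nonneg) simp_all
    with trivial True show ?thesis
      by simp
  next
    case False
    have x_R: "x \<in> span (A ` R)"
      using \<Lambda>(3) R(1) span_mono[of "A ` \<Lambda>" "A ` R"] by auto
    have "\<rho> \<le> L"
      using convexity_le_lipschitz[OF restricted_lipschitz order_refl, of "x - xs"] False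
        sparse_wrt_of_span[OF R(2) _ span_diff[OF x_R R(4)]] R(3) by simp
    have "(\<rho> / 2 - \<epsilon>) * ?e
      \<le> (L + 1 / \<theta>\<^sup>2) * (norm (x - xs))\<^sup>2 / (2 * \<eta>\<^sup>2) - \<rho> / 2 * (norm (x - xs))\<^sup>2
        + c * norm (x - xs) * (norm (F xs) + \<bar>\<sigma>\<bar> + L * norm (x - xs)) + \<theta>\<^sup>2 / 2 * \<bar>\<sigma>\<bar>\<^sup>2
        + max_proj_sq A d (4 * \<tau>) (F xs) / (4 * \<epsilon>)" if "0 < \<epsilon>" "\<epsilon> \<le> \<rho> / 2" for \<epsilon>
      using mean_residual_bound[OF M R \<Lambda>(3) \<Gamma> b mean variance \<eta> \<theta> \<open>\<rho> \<le> L\<close> that]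
      unfolding c_def by (simp add: norm_minus_commute)
    from residual_bound_arith[OF convexity_pos \<eta> max_proj_sq_nonneg[OF dim] E[OF False]
        \<open>\<rho> \<le> L\<close> trivial this[unfolded c_def]]
    show ?thesis
      unfolding c_def by simp
  qed
qed

end

theorem lemma4:
  fixes A :: "nat \<Rightarrow> 'a::euclidean_space" and d N M \<tau> i :: nat
    and p :: "nat \<Rightarrow> real"
    and g :: "nat \<Rightarrow> nat \<Rightarrow> 'a \<Rightarrow> real" and G :: "nat \<Rightarrow> nat \<Rightarrow> 'a \<Rightarrow> 'a"
    and rho_m :: "nat \<Rightarrow> nat \<Rightarrow> real" and rho_p :: "nat \<Rightarrow> nat \<Rightarrow> nat \<Rightarrow> real"
    and \<sigma> :: "nat \<Rightarrow> real" and \<eta>\<^sub>1 \<theta> :: real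
    and xstar x :: 'a and \<Lambda> :: "nat set"
    and \<Gamma> :: "nat \<Rightarrow> nat set" and b :: "nat \<Rightarrow> 'a"
  assumes p_range: "\<forall>l<N. 0 \<le> p l \<and> p l \<le> 1"
    and p_sum: "(\<Sum>l<N. p l) = 1"
    and M_pos: "0 < M"
    and d_ge: "4 * \<tau> \<le> d"
    and grad: "\<forall>l<N. \<forall>j<M. \<forall>y. (g l j has_derivative (\<lambda>h. G l j y \<bullet> h)) (at y)"
    and RSC: "\<forall>s\<in>{\<tau>, 4 * \<tau>}. \<forall>l<N. \<forall>x1 x2. sparse_wrt A d s (x1 - x2) \<longrightarrow>
               loc_f M g l x1 - loc_f M g l x2 - loc_grad M G l x2 \<bullet> (x1 - x2)
                 \<ge> rho_m s l / 2 * (norm (x1 - x2))\<^sup>2"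
    and RSC_pos: "\<forall>s\<in>{\<tau>, 4 * \<tau>}. \<forall>l<N. 0 < rho_m s l"
    and RSS: "\<forall>s\<in>{\<tau>, 4 * \<tau>}. \<forall>l<N. \<forall>j<M. \<forall>x1 x2. sparse_wrt A d s (x1 - x2) \<longrightarrow>
               norm (G l j x1 - G l j x2) \<le> rho_p s l j * norm (x1 - x2)"
    and variance: "\<forall>l<N. \<forall>y. sparse_wrt A d \<tau> y \<longrightarrow>
               (1 / real M) * (\<Sum>j<M. (norm (G l j y - loc_grad M G l y))\<^sup>2) \<le> (\<sigma> l)\<^sup>2"
    and xstar_sparse: "sparse_wrt A d \<tau> xstar"
    and xstar_min: "\<forall>y. sparse_wrt A d \<tau> y \<longrightarrow>
               (\<Sum>l<N. p l * loc_f M g l xstar) \<le> (\<Sum>l<N. p l * loc_f M g l y)"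
    and eta1: "1 \<le> \<eta>\<^sub>1"
    and theta: "0 < \<theta>"
    and client: "i < N"
    and Lambda: "\<Lambda> \<subseteq> {..<d}" "card \<Lambda> \<le> \<tau>" "x \<in> span (A ` \<Lambda>)"
    and Gamma: "\<forall>j<M. is_approx A d (2 * \<tau>) (G i j x) \<eta>\<^sub>1 (\<Gamma> j)"
    and b_min: "\<forall>j<M. b j \<in> span (A ` (\<Gamma> j \<union> \<Lambda>)) \<and>
               (\<forall>y\<in>span (A ` (\<Gamma> j \<union> \<Lambda>)). loc_f M g i (b j) \<le> loc_f M g i y)"
  shows "(let rm = rho_m (4 * \<tau>) i;
              rbar = (1 / real M) * (\<Sum>j<M. rho_p (4 * \<tau>) i j);
              Erho2 = (1 / real M) * (\<Sum>j<M. (rho_p \<tau> i j)\<^sup>2);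
              gstar = loc_grad M G i xstar;
              mx = Max {(norm (proj A \<Omega> gstar))\<^sup>2 | \<Omega>. \<Omega> \<subseteq> {..<d} \<and> card \<Omega> = 4 * \<tau>};
              c = sqrt (\<eta>\<^sub>1\<^sup>2 - 1) / \<eta>\<^sub>1;
              \<beta>\<^sub>2 = 2 * ((rbar + 1 / \<theta>\<^sup>2) - \<eta>\<^sub>1\<^sup>2 * rm) / (\<eta>\<^sub>1\<^sup>2 * rm)
                   + 2 * sqrt (\<eta>\<^sub>1\<^sup>2 - 1) / (\<eta>\<^sub>1 * rm) * (3 * Erho2 + 1);
              \<xi>\<^sub>2 = (if \<eta>\<^sub>1 > 1
                    then 8 / rm\<^sup>2 * mx
                         + 1 / rm * ((2 * \<theta>\<^sup>2 + 6 * c) * (\<sigma> i)\<^sup>2 + 6 * c * (norm gstar)\<^sup>2)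
                    else 8 / rm\<^sup>2 * mx + 2 * \<theta>\<^sup>2 * (\<sigma> i)\<^sup>2 / rm)
          in (1 / real M) * (\<Sum>j<M. (norm (proj_perp A (\<Gamma> j \<union> \<Lambda>) (b j - xstar)))\<^sup>2)
             \<le> \<beta>\<^sub>2 * (norm (x - xstar))\<^sup>2 + \<xi>\<^sub>2)"
proof -
  define F where "F = loc_grad M G i"
  define \<rho> where "\<rho> = rho_m (4 * \<tau>) i"
  have lip: "norm (F y - F z) \<le> (1 / real M) * (\<Sum>j<M. rho_p s i j) * norm (y - z)"
    if "s \<in> {\<tau>, 4 * \<tau>}" "sparse_wrt A d s (y - z)" for s y z
    unfolding F_def using RSS client that by (intro norm_loc_grad_diff_le) auto
  interpret sparse_objective A d \<tau> "loc_f M g i" F \<rho> "(1 / real M) * (\<Sum>j<M. rho_p (4 * \<tau>) i j)"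
  proof
    show "(loc_f M g i has_derivative (\<lambda>h. F y \<bullet> h)) (at y)" for y
      unfolding F_def using grad client by (intro loc_f_has_derivative) auto
    show "\<rho> / 2 * (norm (y - z))\<^sup>2 \<le> loc_f M g i y - loc_f M g i z - F z \<bullet> (y - z)"
      if "sparse_wrt A d (4 * \<tau>) (y - z)" for y z
      using RSC client that unfolding F_def \<rho>_def by auto
    show "0 < \<rho>"
      using RSC_pos client unfolding \<rho>_def by auto
  qed (use d_ge lip in auto)
  have x_sparse: "sparse_wrt A d \<tau> x"
    using sparse_wrt_of_span[OF Lambda] .
  have E: "\<rho>\<^sup>2 \<le> (1 / real M) * (\<Sum>j<M. (rho_p \<tau> i j)\<^sup>2)" if x_ne: "x \<noteq> xstar"
  proof -
    obtain v where "sparse_wrt A d \<tau> v" "v \<noteq> 0"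
      using x_ne x_sparse xstar_sparse by metis
    with M_pos lip show ?thesis
      by (intro convexity_sq_le_mean_sq) auto
  qed
  have mean: "(1 / real M) *\<^sub>R (\<Sum>j<M. G i j x) = F x"
    unfolding F_def loc_grad_def ..
  note bound = expected_residual_bound[OF M_pos Lambda xstar_sparse Gamma[rule_format]
      conjunct1[OF b_min[rule_format]] mean variance[rule_format, OF client x_sparse, folded F_def]
      eta1 theta E]
  have "sqrt (\<eta>\<^sub>1\<^sup>2 - 1) / \<eta>\<^sub>1 = 0" if "\<not> \<eta>\<^sub>1 > 1"
    using that eta1 by simp
  with bound show ?thesis
    unfolding Let_def F_def \<rho>_def max_proj_sq_def by auto
qed

end
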